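(* Let $F$ be an algebraically closed field of characteristic $\neq 2$, $R=F[t]$ with the involution ${}^*$ described in the context. Let $a,b\in R$ satisfy $\gcd(a,b)=1$ and $\gcd(b,b^* )=1$. Then there exist $x,y\in R$ with $x$ even (i.e. $x^*=x$) such that $ax+by=1$.
   Context: $R=F[t]$ is the polynomial ring over $F$, and ${}^*$ is the $F$-algebra involution of $R$ that is the identity on $F$ and sends $t$ to $-t$. An element $x\in R$ is even if $x^*=x$ (equivalently $x\in F[t^2]$). *)

theory Defs
  imports "HOL-Computational_Algebra.Computational_Algebra"
begin

definition inv_t :: "'a::comm_ring_1 poly \<Rightarrow> 'a poly" where
  "inv_t p = pcompose p [:0, -1:]"

end

theory Submission
  imports Defs
begin

text \<open>Choose u with a u \<equiv> 1 mod b. Since b and b* are coprime, the Chinese remainder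
theorem gives x0 with x0 \<equiv> u mod b and x0 \<equiv> u* mod b*; applying the involution to the
second congruence yields x0* \<equiv> u mod b as well. The even part x = (x0 + x0*)/2, which
needs 2 to be invertible, is then an even solution of a x \<equiv> 1 mod b.\<close>

lemma inv_t_add: "inv_t (p + q) = inv_t p + inv_t q"
  unfolding inv_t_def by (rule pcompose_add)

lemma inv_t_diff: "inv_t (p - q) = inv_t p - inv_t (q::'a::comm_ring_1 poly)"
  unfolding inv_t_def by (rule pcompose_diff)

lemma inv_t_mult: "inv_t (p * q) = inv_t p * inv_t q"
  unfolding inv_t_def by (rule pcompose_mult)

lemma inv_t_smult: "inv_t (smult c p) = smult c (inv_t p)"
  unfolding inv_t_def by (rule pcompose_smult)

lemma inv_t_inv_t [simp]: "inv_t (inv_t p) = (p::'a::comm_ring_1 poly)"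
proof -
  have "pcompose [:0, -1:] [:0, -1::'a:] = [:0, 1:]"
    by (simp add: pcompose_pCons)
  then show ?thesis
    unfolding inv_t_def by (simp add: pcompose_assoc [symmetric] pcompose_idR)
qed

lemma inv_t_dvd_inv_t: "p dvd q \<Longrightarrow> inv_t p dvd inv_t q"
  by (auto simp: inv_t_mult)

definition even_part :: "'a::field poly \<Rightarrow> 'a poly" where
  "even_part p = smult (inverse 2) (p + inv_t p)"

lemma inv_t_even_part: "inv_t (even_part p) = even_part p"
  unfolding even_part_def by (simp add: inv_t_smult inv_t_add add.commute)

lemma dvd_even_part_diff:
  fixes p u :: "'a::field poly"
  assumes "(2::'a) \<noteq> 0" and "b dvd p - u" and "b dvd inv_t p - u"
  shows "b dvd even_part p - u"
proof -
  have "smult (inverse 2) u + smult (inverse 2) u = u"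
    using assms(1) by (simp add: numeral_mult_conv_smult flip: mult_2 smult_add_right)
  then have "even_part p - u = smult (inverse 2) ((p - u) + (inv_t p - u))"
    by (simp add: even_part_def smult_add_right smult_diff_right algebra_simps)
  then show ?thesis
    using dvd_smult [OF dvd_add [OF assms(2,3)]] by simp
qed

lemma two_neq_zero_if_CHAR_neq_2:
  assumes "CHAR('a::{semiring_1, zero_neq_one}) \<noteq> 2"
  shows "(2::'a) \<noteq> 0"
proof
  assume "(2::'a) = 0"
  then have "CHAR('a) dvd 2"
    by (metis of_nat_eq_0_iff_char_dvd of_nat_numeral)
  then have "CHAR('a) = 1 \<or> CHAR('a) = 2"
    using two_is_prime_nat prime_nat_iff by blast
  with assms show False
    by simp
qed

lemma chinese_remainder_coprime:
  fixes b c :: "'a::euclidean_ring_gcd"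
  assumes "coprime b c"
  shows "\<exists>x. b dvd x - u \<and> c dvd x - w"
proof -
  obtain s t where st: "s * b + t * c = 1"
    using bezout_coefficients_fst_snd [of b c] assms by (auto simp: coprime_iff_gcd_eq_1)
  define x where "x = u * t * c + w * s * b"
  have "x - u = x - u * (s * b + t * c)"
    by (simp add: st)
  also have "\<dots> = b * ((w - u) * s)"
    by (simp add: x_def algebra_simps)
  finally have "b dvd x - u"
    by simp
  have "x - w = x - w * (s * b + t * c)"
    by (simp add: st)
  also have "\<dots> = c * ((u - w) * t)"
    by (simp add: x_def algebra_simps)
  finally have "c dvd x - w"
    by simp
  with \<open>b dvd x - u\<close> show ?thesis
    by blast
qed

theorem lemma3p2:
  fixes a b :: "'a::{alg_closed_field, field_gcd} poly"
  assumes "CHAR('a) \<noteq> 2"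
    and "gcd a b = 1"
    and "gcd b (inv_t b) = 1"
  shows "\<exists>x y. inv_t x = x \<and> a * x + b * y = 1"
proof -
  obtain u v where bezout: "u * a + v * b = 1"
    using bezout_coefficients_fst_snd [of a b] assms(2) by metis
  have "coprime b (inv_t b)"
    using assms(3) by (simp add: coprime_iff_gcd_eq_1)
  then obtain x0 where x0_mod_b: "b dvd x0 - u" and x0_mod_inv_t_b: "inv_t b dvd x0 - inv_t u"
    using chinese_remainder_coprime by blast
  have "b dvd inv_t x0 - u"
    using inv_t_dvd_inv_t [OF x0_mod_inv_t_b] by (simp add: inv_t_diff)
  with x0_mod_b have "b dvd even_part x0 - u"
    using dvd_even_part_diff two_neq_zero_if_CHAR_neq_2 [OF assms(1)] by blast
  then obtain k where k: "even_part x0 - u = b * k"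
    by (elim dvdE)
  have "a * even_part x0 + b * (v - a * k) = u * a + v * b + a * (even_part x0 - u - b * k)"
    by (simp add: algebra_simps)
  with k bezout have "a * even_part x0 + b * (v - a * k) = 1"
    by simp
  with inv_t_even_part show ?thesis
    by blast
qed

end
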